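(* Let $n\ge 1$, $L>0$, $D\subseteq\mathbb{R}$ compact, and let $T$ be an input-dependent CPTP map on $n$ qubits (for each $x\in D\cap[-L,L]$, $T(x)$ is a CPTP map on $2^n\times 2^n$ complex matrices) such that for some $0<\epsilon\le1$ and all $x\in D\cap[-L,L]$, $\sup_{A\in H_0(2^n),A\ne0}\|T(x)A\|_2/\|A\|_2\le 1-\epsilon$, where $H_0(2^n)$ is the space of traceless Hermitian $2^n\times 2^n$ matrices. Let $h$ be any real-valued function on the set $\mathcal{D}(\mathbb{C}^{2^n})$ of density operators. Then for every $u\in K_L(D)$ and every $k\in\mathbb{Z}$, and every choice of density operators $\rho_{-N}\in\mathcal{D}(\mathbb{C}^{2^n})$, $N\ge 0$, the limit $$\lim_{N\to\infty} T(u_k)T(u_{k-1})\cdots T(u_{k-N})\,\rho_{-N}$$ exists in $\mathcal{D}(\mathbb{C}^{2^n})$ (with respect to $\|\cdot\|_2$) and is independent of the choice of the $\rho_{-N}$. Consequently the filter $M_h^T:K_L(D)\to\mathbb{R}^{\mathbb{Z}}$, $M_h^T(u)_k=h\big(\lim_{N\to\infty}T(u_k)T(u_{k-1})\cdots T(u_{k-N})\rho_{-N}\big)$, is well-defined.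
   Context: $\|\cdot\|_2$ is the Schatten 2-norm. $K_L(D)$ is the set of real sequences $\{u_k\}_{k\in\mathbb{Z}}$ with $u_k\in D\cap[-L,L]$ for all $k$; $\mathbb{R}^{\mathbb{Z}}$ is the set of real bi-infinite sequences. *)

theory Defs
  imports Complex_Main "Jordan_Normal_Form.Matrix"
begin

definition mat_trace :: "complex mat \<Rightarrow> complex" where
  "mat_trace A = (\<Sum>i<dim_row A. A $$ (i, i))"

definition hermitian_mat :: "nat \<Rightarrow> complex mat \<Rightarrow> bool" where
  "hermitian_mat d A \<longleftrightarrow> A \<in> carrier_mat d d \<and>
     (\<forall>i<d. \<forall>j<d. A $$ (j, i) = cnj (A $$ (i, j)))"

definition psd_mat :: "nat \<Rightarrow> complex mat \<Rightarrow> bool" where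
  "psd_mat d A \<longleftrightarrow> hermitian_mat d A \<and>
     (\<forall>v \<in> carrier_vec d. 0 \<le> Re (\<Sum>i<d. \<Sum>j<d. cnj (v $ i) * A $$ (i, j) * v $ j))"

definition density_op :: "nat \<Rightarrow> complex mat \<Rightarrow> bool" where
  "density_op d \<rho> \<longleftrightarrow> psd_mat d \<rho> \<and> mat_trace \<rho> = 1"

definition schatten2 :: "complex mat \<Rightarrow> real" where
  "schatten2 A = sqrt (\<Sum>i<dim_row A. \<Sum>j<dim_col A. (cmod (A $$ (i, j)))\<^sup>2)"

definition linear_map_mat :: "nat \<Rightarrow> (complex mat \<Rightarrow> complex mat) \<Rightarrow> bool" where
  "linear_map_mat d T \<longleftrightarrow>
     (\<forall>A \<in> carrier_mat d d. T A \<in> carrier_mat d d) \<and>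
     (\<forall>A \<in> carrier_mat d d. \<forall>B \<in> carrier_mat d d. T (A + B) = T A + T B) \<and>
     (\<forall>A \<in> carrier_mat d d. \<forall>c. T (c \<cdot>\<^sub>m A) = c \<cdot>\<^sub>m T A)"

text \<open>(id_k \<otimes> T) applied to a (k*d)x(k*d) matrix viewed as a k x k array of d x d blocks.\<close>
definition block_of :: "nat \<Rightarrow> complex mat \<Rightarrow> nat \<Rightarrow> nat \<Rightarrow> complex mat" where
  "block_of d M a b = mat d d (\<lambda>(i, j). M $$ (a * d + i, b * d + j))"

definition id_tensor :: "nat \<Rightarrow> nat \<Rightarrow> (complex mat \<Rightarrow> complex mat) \<Rightarrow> complex mat \<Rightarrow> complex mat" where
  "id_tensor k d T M = mat (k * d) (k * d)
     (\<lambda>(r, c). T (block_of d M (r div d) (c div d)) $$ (r mod d, c mod d))"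

definition completely_positive :: "nat \<Rightarrow> (complex mat \<Rightarrow> complex mat) \<Rightarrow> bool" where
  "completely_positive d T \<longleftrightarrow>
     (\<forall>k \<ge> 1. \<forall>M. psd_mat (k * d) M \<longrightarrow> psd_mat (k * d) (id_tensor k d T M))"

definition trace_preserving :: "nat \<Rightarrow> (complex mat \<Rightarrow> complex mat) \<Rightarrow> bool" where
  "trace_preserving d T \<longleftrightarrow> (\<forall>A \<in> carrier_mat d d. mat_trace (T A) = mat_trace A)"

definition CPTP :: "nat \<Rightarrow> (complex mat \<Rightarrow> complex mat) \<Rightarrow> bool" where
  "CPTP d T \<longleftrightarrow> linear_map_mat d T \<and> completely_positive d T \<and> trace_preserving d T"

definition K_L :: "real \<Rightarrow> real set \<Rightarrow> (int \<Rightarrow> real) set" where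
  "K_L L D = {u. \<forall>k. u k \<in> D \<inter> {-L..L}}"

text \<open>chain T u k N \<rho> = T(u_k) T(u_{k-1}) ... T(u_{k-N}) \<rho>.\<close>
fun chain :: "(real \<Rightarrow> complex mat \<Rightarrow> complex mat) \<Rightarrow> (int \<Rightarrow> real) \<Rightarrow> int \<Rightarrow> nat
      \<Rightarrow> complex mat \<Rightarrow> complex mat" where
  "chain T u k 0 \<rho> = T (u k) \<rho>"
| "chain T u k (Suc N) \<rho> = chain T u k N (T (u (k - int N - 1)) \<rho>)"

end

theory Submission
  imports Defs "HOL-Analysis.L2_Norm"
begin

text \<open>The difference of two density operators is traceless Hermitian, so each \<open>T(x)\<close> contracts
  the Hilbert-Schmidt distance between density operators by the factor \<open>c = 1 - \<epsilon>\<close>, and the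
  composition of \<open>N + 1\<close> of them by \<open>c\<^sup>N\<^sup>+\<^sup>1\<close>. Since density operators have entries of modulus at
  most 2, their mutual distances are bounded by \<open>4 \<cdot> 2\<^sup>n\<close>; hence all outputs of chains of length
  \<open>N\<close> lie within \<open>4 \<cdot> 2\<^sup>n \<cdot> c\<^sup>N\<^sup>+\<^sup>1\<close> of each other, whatever their inputs. Outputs from a fixed
  input therefore form a Cauchy sequence, whose limit is a density operator because that set is
  closed, and every other choice of inputs converges to the same limit.\<close>

lemma schatten2_nonneg: "0 \<le> schatten2 A"
  unfolding schatten2_def by (auto intro!: sum_nonneg)

lemma schatten2_eq_L2_set:
  "schatten2 A = L2_set (\<lambda>(i, j). cmod (A $$ (i, j))) ({..<dim_row A} \<times> {..<dim_col A})"
  unfolding schatten2_def L2_set_def sum.cartesian_product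
  by (intro arg_cong[where f = sqrt] sum.cong) auto

lemma schatten2_eq_0_iff:
  assumes "A \<in> carrier_mat r c"
  shows "schatten2 A = 0 \<longleftrightarrow> A = 0\<^sub>m r c"
proof -
  have "schatten2 A = 0 \<longleftrightarrow> (\<forall>i<r. \<forall>j<c. A $$ (i, j) = 0)"
    using assms by (auto simp: schatten2_eq_L2_set L2_set_eq_0_iff)
  also have "\<dots> \<longleftrightarrow> A = 0\<^sub>m r c"
    using assms by (auto intro!: eq_matI)
  finally show ?thesis .
qed

lemma norm_entry_le_schatten2:
  assumes "i < dim_row A" "j < dim_col A"
  shows "cmod (A $$ (i, j)) \<le> schatten2 A"
  using member_le_L2_set[of "{..<dim_row A} \<times> {..<dim_col A}" "(i, j)"
      "\<lambda>(i, j). cmod (A $$ (i, j))"] assms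
  by (simp add: schatten2_eq_L2_set)

lemma schatten2_add_le:
  assumes "A \<in> carrier_mat r c" "B \<in> carrier_mat r c"
  shows "schatten2 (A + B) \<le> schatten2 A + schatten2 B"
proof -
  let ?I = "{..<r} \<times> {..<c}"
  let ?a = "\<lambda>(i, j). cmod (A $$ (i, j))" and ?b = "\<lambda>(i, j). cmod (B $$ (i, j))"
  have "schatten2 (A + B) = L2_set (\<lambda>(i, j). cmod (A $$ (i, j) + B $$ (i, j))) ?I"
    using assms by (auto simp: schatten2_eq_L2_set intro!: L2_set_cong)
  also have "\<dots> \<le> L2_set (\<lambda>p. ?a p + ?b p) ?I"
    by (rule L2_set_mono) (auto simp: norm_triangle_ineq)
  also have "\<dots> \<le> L2_set ?a ?I + L2_set ?b ?I"
    by (rule L2_set_triangle_ineq)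
  also have "\<dots> = schatten2 A + schatten2 B"
    using assms by (simp add: schatten2_eq_L2_set)
  finally show ?thesis .
qed

lemma schatten2_diff_triangle:
  assumes "A \<in> carrier_mat r c" "B \<in> carrier_mat r c" "C \<in> carrier_mat r c"
  shows "schatten2 (A - C) \<le> schatten2 (A - B) + schatten2 (B - C)"
proof -
  have "A - C = (A - B) + (B - C)"
    using assms by (intro eq_matI) auto
  then show ?thesis
    using assms schatten2_add_le[of "A - B" r c "B - C"] by (simp add: minus_carrier_mat)
qed

lemma schatten2_diff_tendsto_0_iff:
  assumes "\<And>N. X N \<in> carrier_mat r c" "\<sigma> \<in> carrier_mat r c"
  shows "(\<lambda>N. schatten2 (X N - \<sigma>)) \<longlonglongrightarrow> 0 \<longleftrightarrow>
         (\<forall>i<r. \<forall>j<c. (\<lambda>N. X N $$ (i, j)) \<longlonglongrightarrow> \<sigma> $$ (i, j))"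
proof
  assume lim: "(\<lambda>N. schatten2 (X N - \<sigma>)) \<longlonglongrightarrow> 0"
  show "\<forall>i<r. \<forall>j<c. (\<lambda>N. X N $$ (i, j)) \<longlonglongrightarrow> \<sigma> $$ (i, j)"
  proof (intro allI impI)
    fix i j assume ij: "i < r" "j < c"
    have "\<forall>N. norm (X N $$ (i, j) - \<sigma> $$ (i, j)) \<le> norm (schatten2 (X N - \<sigma>)) * 1"
      using norm_entry_le_schatten2[of i "X _ - \<sigma>" j] assms ij
      by (simp add: abs_of_nonneg schatten2_nonneg)
    then have "(\<lambda>N. X N $$ (i, j) - \<sigma> $$ (i, j)) \<longlonglongrightarrow> 0"
      by (rule tendsto_0_le[OF lim always_eventually])
    then show "(\<lambda>N. X N $$ (i, j)) \<longlonglongrightarrow> \<sigma> $$ (i, j)"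
      by (simp add: LIM_zero_iff)
  qed
next
  assume lim: "\<forall>i<r. \<forall>j<c. (\<lambda>N. X N $$ (i, j)) \<longlonglongrightarrow> \<sigma> $$ (i, j)"
  have "(\<lambda>N. sqrt (\<Sum>i<r. \<Sum>j<c. (cmod (X N $$ (i, j) - \<sigma> $$ (i, j)))\<^sup>2))
        \<longlonglongrightarrow> sqrt (\<Sum>i<r. \<Sum>j<c. (cmod (\<sigma> $$ (i, j) - \<sigma> $$ (i, j)))\<^sup>2)"
    using lim by (intro tendsto_intros) auto
  moreover have "schatten2 (X N - \<sigma>) = sqrt (\<Sum>i<r. \<Sum>j<c. (cmod (X N $$ (i, j) - \<sigma> $$ (i, j)))\<^sup>2)"
    for N
    using assms unfolding schatten2_def by (auto intro!: arg_cong[where f = sqrt] sum.cong)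
  ultimately show "(\<lambda>N. schatten2 (X N - \<sigma>)) \<longlonglongrightarrow> 0"
    by simp
qed

lemma schatten2_Cauchy_imp_convergent:
  assumes carrier: "\<And>N. X N \<in> carrier_mat r c"
    and cauchy: "\<And>e. 0 < e \<Longrightarrow> \<exists>M. \<forall>m\<ge>M. \<forall>n\<ge>M. schatten2 (X m - X n) < e"
  shows "\<exists>\<sigma> \<in> carrier_mat r c. (\<lambda>N. schatten2 (X N - \<sigma>)) \<longlonglongrightarrow> 0"
proof -
  have "Cauchy (\<lambda>N. X N $$ (i, j))" if "i < r" "j < c" for i j
  proof (rule metric_CauchyI)
    fix e :: real assume "0 < e"
    then obtain M where M: "\<forall>m\<ge>M. \<forall>n\<ge>M. schatten2 (X m - X n) < e"
      using cauchy by blast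
    have "dist (X m $$ (i, j)) (X n $$ (i, j)) < e" if "M \<le> m" "M \<le> n" for m n
    proof -
      have "dist (X m $$ (i, j)) (X n $$ (i, j)) \<le> schatten2 (X m - X n)"
        using norm_entry_le_schatten2[of i "X m - X n" j] carrier[of m] carrier[of n]
          \<open>i < r\<close> \<open>j < c\<close>
        by (simp add: dist_norm)
      also have "\<dots> < e"
        using M that by blast
      finally show ?thesis .
    qed
    then show "\<exists>M. \<forall>m\<ge>M. \<forall>n\<ge>M. dist (X m $$ (i, j)) (X n $$ (i, j)) < e"
      by blast
  qed
  then have lim: "(\<lambda>N. X N $$ (i, j)) \<longlonglongrightarrow> lim (\<lambda>N. X N $$ (i, j))" if "i < r" "j < c" for i j
    using that by (simp add: Cauchy_convergent_iff convergent_LIMSEQ_iff)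
  define \<sigma> where "\<sigma> = mat r c (\<lambda>(i, j). lim (\<lambda>N. X N $$ (i, j)))"
  have "\<sigma> \<in> carrier_mat r c"
    unfolding \<sigma>_def by simp
  moreover have "(\<lambda>N. schatten2 (X N - \<sigma>)) \<longlonglongrightarrow> 0"
    using lim by (subst schatten2_diff_tendsto_0_iff[OF carrier \<open>\<sigma> \<in> carrier_mat r c\<close>])
      (simp add: \<sigma>_def)
  ultimately show ?thesis
    by blast
qed

lemma density_op_carrier: "density_op d \<rho> \<Longrightarrow> \<rho> \<in> carrier_mat d d"
  unfolding density_op_def psd_mat_def hermitian_mat_def by blast

lemma density_op_hermitian: "density_op d \<rho> \<Longrightarrow> hermitian_mat d \<rho>"
  unfolding density_op_def psd_mat_def by blast

lemma hermitian_mat_diff: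
  assumes "hermitian_mat d A" "hermitian_mat d B"
  shows "hermitian_mat d (A - B)"
proof -
  have carrier: "A \<in> carrier_mat d d" "B \<in> carrier_mat d d"
    using assms unfolding hermitian_mat_def by blast+
  have "(A - B) $$ (j, i) = cnj ((A - B) $$ (i, j))" if "i < d" "j < d" for i j
  proof -
    have "A $$ (j, i) = cnj (A $$ (i, j))" "B $$ (j, i) = cnj (B $$ (i, j))"
      using assms that unfolding hermitian_mat_def by blast+
    then show ?thesis
      using carrier that by simp
  qed
  then show ?thesis
    using carrier unfolding hermitian_mat_def by (simp add: minus_carrier_mat)
qed

lemma mat_trace_diff:
  assumes "A \<in> carrier_mat d d" "B \<in> carrier_mat d d"
  shows "mat_trace (A - B) = mat_trace A - mat_trace B"
  using assms unfolding mat_trace_def by (simp add: sum_subtractf)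

lemma quadratic_form_unit_vec:
  fixes A :: "complex mat"
  assumes "i < d"
  shows "(\<Sum>p<d. \<Sum>q<d. cnj (unit_vec d i $ p) * A $$ (p, q) * unit_vec d i $ q) = A $$ (i, i)"
proof -
  have "(\<Sum>q<d. cnj (unit_vec d i $ p) * A $$ (p, q) * unit_vec d i $ q)
        = (if p = i then A $$ (i, i) else 0)" if "p < d" for p
  proof -
    have "(\<Sum>q<d. cnj (unit_vec d i $ p) * A $$ (p, q) * unit_vec d i $ q)
          = (\<Sum>q<d. if q = i then cnj (unit_vec d i $ p) * A $$ (p, i) else 0)"
      using assms by (intro sum.cong) (auto simp: unit_vec_def)
    then show ?thesis
      using assms that by (auto simp: unit_vec_def)
  qed
  then show ?thesis
    using assms by simp
qed

lemma quadratic_form_two_point_vec: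
  fixes A :: "complex mat" and c :: complex
  assumes "i < d" "j < d" "i \<noteq> j"
  defines "v \<equiv> vec d (\<lambda>p. if p = i then 1 else if p = j then c else 0)"
  shows "(\<Sum>p<d. \<Sum>q<d. cnj (v $ p) * A $$ (p, q) * v $ q)
         = A $$ (i, i) + A $$ (i, j) * c + cnj c * A $$ (j, i) + cnj c * A $$ (j, j) * c"
proof -
  have v: "v $ p = (if p = i then 1 else 0) + (if p = j then c else 0)" if "p < d" for p
    using assms(3) that unfolding v_def by auto
  have inner: "(\<Sum>q<d. cnj (v $ p) * A $$ (p, q) * v $ q)
               = cnj (v $ p) * (A $$ (p, i) + A $$ (p, j) * c)" for p
  proof -
    have "(\<Sum>q<d. cnj (v $ p) * A $$ (p, q) * v $ q)
          = (\<Sum>q<d. cnj (v $ p) * ((if q = i then A $$ (p, i) else 0)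
                                    + (if q = j then A $$ (p, j) * c else 0)))"
      using assms(3) by (intro sum.cong) (auto simp: v)
    also have "\<dots> = cnj (v $ p) * (A $$ (p, i) + A $$ (p, j) * c)"
      using assms(1,2) by (simp add: sum_distrib_left[symmetric] sum.distrib)
    finally show ?thesis .
  qed
  have "(\<Sum>p<d. \<Sum>q<d. cnj (v $ p) * A $$ (p, q) * v $ q)
        = (\<Sum>p<d. (if p = i then A $$ (i, i) + A $$ (i, j) * c else 0)
                 + (if p = j then cnj c * (A $$ (j, i) + A $$ (j, j) * c) else 0))"
    unfolding inner using assms(3) by (intro sum.cong) (auto simp: v)
  also have "\<dots> = A $$ (i, i) + A $$ (i, j) * c + cnj c * A $$ (j, i) + cnj c * A $$ (j, j) * c"
    using assms(1,2) by (simp add: sum.distrib algebra_simps)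
  finally show ?thesis .
qed

lemma density_op_diag:
  assumes "density_op d \<rho>" "i < d"
  shows "Im (\<rho> $$ (i, i)) = 0" "0 \<le> Re (\<rho> $$ (i, i))" "Re (\<rho> $$ (i, i)) \<le> 1"
proof -
  have "\<rho> $$ (i, i) = cnj (\<rho> $$ (i, i))"
    using density_op_hermitian[OF assms(1)] assms(2) unfolding hermitian_mat_def by blast
  then have "Im (\<rho> $$ (i, i)) = Im (cnj (\<rho> $$ (i, i)))"
    by (rule arg_cong)
  then show "Im (\<rho> $$ (i, i)) = 0"
    by simp
  have nonneg: "0 \<le> Re (\<rho> $$ (i, i))" if "i < d" for i
  proof -
    have "0 \<le> Re (\<Sum>p<d. \<Sum>q<d. cnj (unit_vec d i $ p) * \<rho> $$ (p, q) * unit_vec d i $ q)"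
      using assms(1) unit_vec_carrier[of d i] unfolding density_op_def psd_mat_def by blast
    then show ?thesis
      using quadratic_form_unit_vec[OF that] by simp
  qed
  then show "0 \<le> Re (\<rho> $$ (i, i))"
    using assms(2) .
  have "(\<Sum>i<d. \<rho> $$ (i, i)) = 1"
    using assms(1) density_op_carrier[OF assms(1)] unfolding density_op_def mat_trace_def by simp
  then have "(\<Sum>i<d. Re (\<rho> $$ (i, i))) = 1"
    using Re_sum[of "\<lambda>i. \<rho> $$ (i, i)" "{..<d}"] by simp
  moreover have "Re (\<rho> $$ (i, i)) \<le> (\<Sum>i<d. Re (\<rho> $$ (i, i)))"
    using assms(2) nonneg by (intro member_le_sum) auto
  ultimately show "Re (\<rho> $$ (i, i)) \<le> 1"
    by simp
qed

text \<open>Positivity on the vectors \<open>e\<^sub>i + c e\<^sub>j\<close>, \<open>c \<in> {\<plusminus>1, \<plusminus>\<i>}\<close>, bounds the real and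
  imaginary parts of an off-diagonal entry by the diagonal entries, which are at most one.\<close>
lemma norm_density_op_entry_le:
  assumes "density_op d \<rho>" "i < d" "j < d"
  shows "cmod (\<rho> $$ (i, j)) \<le> 2"
proof (cases "i = j")
  case True
  then show ?thesis
    using density_op_diag[OF assms(1,2)] cmod_le[of "\<rho> $$ (i, i)"] by auto
next
  case False
  have herm: "\<rho> $$ (j, i) = cnj (\<rho> $$ (i, j))"
    using density_op_hermitian[OF assms(1)] assms(2,3) unfolding hermitian_mat_def by blast
  have form: "0 \<le> Re (\<rho> $$ (i, i) + \<rho> $$ (i, j) * c + cnj c * \<rho> $$ (j, i) + cnj c * \<rho> $$ (j, j) * c)"
    for c
  proof -
    let ?v = "vec d (\<lambda>p. if p = i then 1 else if p = j then c else 0) :: complex vec"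
    have "0 \<le> Re (\<Sum>p<d. \<Sum>q<d. cnj (?v $ p) * \<rho> $$ (p, q) * ?v $ q)"
      using assms(1) vec_carrier[of d] unfolding density_op_def psd_mat_def by blast
    then show ?thesis
      by (simp only: quadratic_form_two_point_vec[OF assms(2,3) False])
  qed
  have "0 \<le> Re (\<rho> $$ (i, i)) + 2 * Re (\<rho> $$ (i, j)) + Re (\<rho> $$ (j, j))"
    "0 \<le> Re (\<rho> $$ (i, i)) - 2 * Re (\<rho> $$ (i, j)) + Re (\<rho> $$ (j, j))"
    "0 \<le> Re (\<rho> $$ (i, i)) - 2 * Im (\<rho> $$ (i, j)) + Re (\<rho> $$ (j, j))"
    "0 \<le> Re (\<rho> $$ (i, i)) + 2 * Im (\<rho> $$ (i, j)) + Re (\<rho> $$ (j, j))"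
    using form[of 1] form[of "-1"] form[of "\<i>"] form[of "-\<i>"] herm by simp_all
  then have "\<bar>Re (\<rho> $$ (i, j))\<bar> \<le> 1" "\<bar>Im (\<rho> $$ (i, j))\<bar> \<le> 1"
    using density_op_diag[OF assms(1,2)] density_op_diag[OF assms(1,3)] by auto
  then show ?thesis
    using cmod_le[of "\<rho> $$ (i, j)"] by linarith
qed

lemma schatten2_density_op_diff_le:
  assumes "density_op d a" "density_op d b"
  shows "schatten2 (a - b) \<le> 4 * real d"
proof -
  have carrier: "a \<in> carrier_mat d d" "b \<in> carrier_mat d d"
    using assms by (auto intro: density_op_carrier)
  have "cmod ((a - b) $$ (i, j)) \<le> 4" if "i < d" "j < d" for i j
  proof -
    have "cmod ((a - b) $$ (i, j)) \<le> cmod (a $$ (i, j)) + cmod (b $$ (i, j))"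
      using norm_triangle_ineq4[of "a $$ (i, j)" "b $$ (i, j)"] carrier that by simp
    then show ?thesis
      using norm_density_op_entry_le[OF assms(1) that] norm_density_op_entry_le[OF assms(2) that]
      by simp
  qed
  then have "(\<Sum>i<d. \<Sum>j<d. (cmod ((a - b) $$ (i, j)))\<^sup>2) \<le> (\<Sum>i<d. \<Sum>j<d. 4\<^sup>2)"
    by (intro sum_mono power_mono) auto
  also have "\<dots> = (4 * real d)\<^sup>2"
    by (simp add: power2_eq_square)
  finally show ?thesis
    using carrier unfolding schatten2_def by (simp add: real_le_lsqrt)
qed

lemma density_op_basis_state:
  assumes "0 < d"
  shows "density_op d (mat d d (\<lambda>(i, j). if i = 0 \<and> j = 0 then 1 else 0))"
    (is "density_op d ?e")
proof -
  have "(\<Sum>i<d. \<Sum>j<d. cnj (v $ i) * ?e $$ (i, j) * v $ j) = cnj (v $ 0) * v $ 0"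
    for v :: "complex vec"
  proof -
    have "(\<Sum>j<d. cnj (v $ i) * ?e $$ (i, j) * v $ j) = (if i = 0 then cnj (v $ 0) * v $ 0 else 0)"
      if "i < d" for i
    proof -
      have "(\<Sum>j<d. cnj (v $ i) * ?e $$ (i, j) * v $ j)
            = (\<Sum>j<d. if j = 0 then (if i = 0 then cnj (v $ 0) * v $ 0 else 0) else 0)"
        using that by (intro sum.cong) auto
      then show ?thesis
        using assms by simp
    qed
    then have "(\<Sum>i<d. \<Sum>j<d. cnj (v $ i) * ?e $$ (i, j) * v $ j)
               = (\<Sum>i<d. if i = 0 then cnj (v $ 0) * v $ 0 else 0)"
      by (intro sum.cong) auto
    then show ?thesis
      using assms by simp
  qed
  moreover have "mat_trace ?e = (\<Sum>i<d. if i = 0 then 1 else 0)"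
    unfolding mat_trace_def by (intro sum.cong) auto
  ultimately show ?thesis
    using assms unfolding density_op_def psd_mat_def hermitian_mat_def
    by (auto simp: mult.commute complex_mult_cnj)
qed

lemma density_op_limit:
  assumes dens: "\<And>N. density_op d (X N)" and carrier: "\<sigma> \<in> carrier_mat d d"
    and lim: "(\<lambda>N. schatten2 (X N - \<sigma>)) \<longlonglongrightarrow> 0"
  shows "density_op d \<sigma>"
proof -
  have entry: "(\<lambda>N. X N $$ (i, j)) \<longlonglongrightarrow> \<sigma> $$ (i, j)" if "i < d" "j < d" for i j
    using lim that by (simp add: schatten2_diff_tendsto_0_iff[OF density_op_carrier[OF dens] carrier])
  have "\<sigma> $$ (j, i) = cnj (\<sigma> $$ (i, j))" if "i < d" "j < d" for i j
  proof (rule LIMSEQ_unique[OF entry[OF that(2,1)]])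
    have "X N $$ (j, i) = cnj (X N $$ (i, j))" for N
      using density_op_hermitian[OF dens] that unfolding hermitian_mat_def by blast
    then show "(\<lambda>N. X N $$ (j, i)) \<longlonglongrightarrow> cnj (\<sigma> $$ (i, j))"
      using tendsto_cnj[OF entry[OF that]] by simp
  qed
  then have herm: "hermitian_mat d \<sigma>"
    using carrier unfolding hermitian_mat_def by blast
  have "0 \<le> Re (\<Sum>i<d. \<Sum>j<d. cnj (v $ i) * \<sigma> $$ (i, j) * v $ j)" if "v \<in> carrier_vec d" for v
  proof (rule LIMSEQ_le_const)
    show "(\<lambda>N. Re (\<Sum>i<d. \<Sum>j<d. cnj (v $ i) * X N $$ (i, j) * v $ j))
          \<longlonglongrightarrow> Re (\<Sum>i<d. \<Sum>j<d. cnj (v $ i) * \<sigma> $$ (i, j) * v $ j)"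
      using entry by (intro tendsto_intros) auto
    show "\<exists>M. \<forall>N\<ge>M. 0 \<le> Re (\<Sum>i<d. \<Sum>j<d. cnj (v $ i) * X N $$ (i, j) * v $ j)"
      using dens that unfolding density_op_def psd_mat_def by blast
  qed
  moreover have "mat_trace \<sigma> = 1"
  proof -
    have "(\<lambda>N. \<Sum>i<d. X N $$ (i, i)) \<longlonglongrightarrow> (\<Sum>i<d. \<sigma> $$ (i, i))"
      using entry by (intro tendsto_intros) auto
    moreover have "(\<Sum>i<d. X N $$ (i, i)) = 1" for N
      using dens[of N] density_op_carrier[OF dens[of N]] unfolding density_op_def mat_trace_def
      by simp
    ultimately have "(\<Sum>i<d. \<sigma> $$ (i, i)) = 1"
      by (simp add: LIMSEQ_const_iff)
    then show ?thesis
      using carrier unfolding mat_trace_def by simp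
  qed
  ultimately show ?thesis
    using herm unfolding density_op_def psd_mat_def by blast
qed

definition traceless_contraction :: "nat \<Rightarrow> (complex mat \<Rightarrow> complex mat) \<Rightarrow> real \<Rightarrow> bool" where
  "traceless_contraction d S c \<longleftrightarrow>
     (\<forall>A. hermitian_mat d A \<and> mat_trace A = 0 \<and> A \<noteq> 0\<^sub>m d d \<longrightarrow> schatten2 (S A) / schatten2 A \<le> c)"

lemma linear_map_mat_diff:
  assumes "linear_map_mat d S" "A \<in> carrier_mat d d" "B \<in> carrier_mat d d"
  shows "S (A - B) = S A - S B"
proof -
  have minus_eq: "X - Y = X + (-1) \<cdot>\<^sub>m Y" if "X \<in> carrier_mat d d" "Y \<in> carrier_mat d d"
    for X Y :: "complex mat"
    using that by (intro eq_matI) auto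
  have "S A \<in> carrier_mat d d" "S B \<in> carrier_mat d d"
    using assms unfolding linear_map_mat_def by blast+
  then show ?thesis
    using assms minus_eq[of A B] minus_eq[of "S A" "S B"] unfolding linear_map_mat_def by simp
qed

lemma id_tensor_one:
  assumes "A \<in> carrier_mat d d" "S A \<in> carrier_mat d d"
  shows "id_tensor 1 d S A = S A"
proof -
  have "block_of d A 0 0 = A"
    using assms(1) unfolding block_of_def by (intro eq_matI) auto
  then show ?thesis
    using assms(2) unfolding id_tensor_def by (intro eq_matI) auto
qed

lemma CPTP_density_op:
  assumes "CPTP d S" "density_op d \<rho>"
  shows "density_op d (S \<rho>)"
proof -
  have carrier: "\<rho> \<in> carrier_mat d d" "S \<rho> \<in> carrier_mat d d"
    using assms density_op_carrier unfolding CPTP_def linear_map_mat_def by blast+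
  have "psd_mat (1 * d) (id_tensor 1 d S \<rho>)"
    using assms unfolding CPTP_def completely_positive_def density_op_def by auto
  moreover have "mat_trace (S \<rho>) = 1"
    using assms carrier unfolding CPTP_def trace_preserving_def density_op_def by simp
  ultimately show ?thesis
    using id_tensor_one[of \<rho> d S] carrier unfolding density_op_def by simp
qed

lemma traceless_contraction_density_op:
  assumes "linear_map_mat d S" "traceless_contraction d S c" "density_op d a" "density_op d b"
  shows "schatten2 (S a - S b) \<le> c * schatten2 (a - b)"
proof -
  have carrier: "a \<in> carrier_mat d d" "b \<in> carrier_mat d d"
    using assms(3,4) by (auto intro: density_op_carrier)
  show ?thesis
  proof (cases "a - b = 0\<^sub>m d d")
    case True
    have "a = b"
    proof (rule eq_matI)
      fix i j
      assume "i < dim_row b" "j < dim_col b"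
      then show "a $$ (i, j) = b $$ (i, j)"
        using arg_cong[OF True, of "\<lambda>A. A $$ (i, j)"] carrier by simp
    qed (use carrier in auto)
    moreover have "S b \<in> carrier_mat d d"
      using assms(1) carrier unfolding linear_map_mat_def by blast
    ultimately show ?thesis
      using True schatten2_eq_0_iff[of "0\<^sub>m d d" d d] by simp
  next
    case False
    have "hermitian_mat d (a - b)"
      using assms(3,4) by (intro hermitian_mat_diff density_op_hermitian)
    moreover have "mat_trace (a - b) = 0"
      using assms(3,4) carrier unfolding density_op_def by (simp add: mat_trace_diff)
    ultimately have "schatten2 (S (a - b)) / schatten2 (a - b) \<le> c"
      using assms(2) False unfolding traceless_contraction_def by blast
    moreover have "0 < schatten2 (a - b)"
      using False schatten2_nonneg[of "a - b"] schatten2_eq_0_iff[of "a - b" d d] carrier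
      by (simp add: minus_carrier_mat order_le_less)
    ultimately show ?thesis
      using linear_map_mat_diff[OF assms(1) carrier] by (simp add: divide_le_eq)
  qed
qed

lemma chain_density_op:
  assumes "\<And>m. CPTP d (T (u m))" "density_op d \<rho>"
  shows "density_op d (chain T u k N \<rho>)"
  using assms(2) by (induction N arbitrary: \<rho>) (simp_all add: CPTP_density_op assms(1))

lemma chain_add_eq_chain_density_op:
  assumes "\<And>m. CPTP d (T (u m))" "density_op d \<rho>"
  shows "\<exists>\<rho>'. density_op d \<rho>' \<and> chain T u k (N + M) \<rho> = chain T u k N \<rho>'"
  using assms(2)
proof (induction M arbitrary: \<rho>)
  case 0
  then show ?case
    by auto
next
  case (Suc M)
  then show ?case
    using Suc.IH[OF CPTP_density_op[OF assms(1) Suc.prems]] by simp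
qed

lemma chain_contraction:
  assumes "\<And>m. CPTP d (T (u m))" "\<And>m. traceless_contraction d (T (u m)) c" "0 \<le> c"
    "density_op d a" "density_op d b"
  shows "schatten2 (chain T u k N a - chain T u k N b) \<le> c ^ Suc N * schatten2 (a - b)"
  using assms(4,5)
proof (induction N arbitrary: a b)
  case 0
  have "linear_map_mat d (T (u k))"
    using assms(1) unfolding CPTP_def by blast
  then show ?case
    using traceless_contraction_density_op[OF _ assms(2) 0] by simp
next
  case (Suc N)
  let ?S = "T (u (k - int N - 1))"
  have lin: "linear_map_mat d ?S"
    using assms(1) unfolding CPTP_def by blast
  have "schatten2 (chain T u k (Suc N) a - chain T u k (Suc N) b)
        = schatten2 (chain T u k N (?S a) - chain T u k N (?S b))"
    by simp
  also have "\<dots> \<le> c ^ Suc N * schatten2 (?S a - ?S b)"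
    using Suc.IH CPTP_density_op assms(1) Suc.prems by blast
  also have "\<dots> \<le> c ^ Suc N * (c * schatten2 (a - b))"
    using traceless_contraction_density_op[OF lin assms(2) Suc.prems] assms(3)
    by (intro mult_left_mono) auto
  finally show ?case
    by (simp add: algebra_simps)
qed

lemma chain_diff_le:
  assumes "\<And>m. CPTP d (T (u m))" "\<And>m. traceless_contraction d (T (u m)) c" "0 \<le> c"
    "density_op d a" "density_op d b"
  shows "schatten2 (chain T u k N a - chain T u k N b) \<le> c ^ Suc N * (4 * real d)"
proof -
  have "schatten2 (chain T u k N a - chain T u k N b) \<le> c ^ Suc N * schatten2 (a - b)"
    using assms by (rule chain_contraction)
  also have "\<dots> \<le> c ^ Suc N * (4 * real d)"
    using schatten2_density_op_diff_le[OF assms(4,5)] \<open>0 \<le> c\<close> by (intro mult_left_mono) auto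
  finally show ?thesis .
qed

lemma chain_convergent_density_op:
  assumes CPTP: "\<And>m. CPTP d (T (u m))" and contr: "\<And>m. traceless_contraction d (T (u m)) c"
    and "0 \<le> c" "c < 1" and \<rho>: "density_op d \<rho>"
  shows "\<exists>\<sigma>. density_op d \<sigma> \<and> (\<lambda>N. schatten2 (chain T u k N \<rho> - \<sigma>)) \<longlonglongrightarrow> 0"
proof -
  define x where "x N = chain T u k N \<rho>" for N
  have x: "density_op d (x N)" for N
    unfolding x_def using chain_density_op[where T = T and u = u, OF CPTP \<rho>] .
  have "\<exists>M. \<forall>m\<ge>M. \<forall>n\<ge>M. schatten2 (x m - x n) < e" if "0 < e" for e
  proof -
    have "(\<lambda>N. c ^ Suc N * (4 * real d)) \<longlonglongrightarrow> 0"
      using \<open>0 \<le> c\<close> \<open>c < 1\<close>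
      by (intro tendsto_mult_left_zero LIMSEQ_power_zero[THEN LIMSEQ_Suc]) simp
    then obtain M where "\<forall>N\<ge>M. norm (c ^ Suc N * (4 * real d) - 0) < e"
      using LIMSEQ_D \<open>0 < e\<close> by blast
    then have M: "c ^ Suc M * (4 * real d) < e"
      by (auto dest: spec[of _ M])
    have tail: "\<exists>a. density_op d a \<and> x m = chain T u k M a" if "M \<le> m" for m
      using chain_add_eq_chain_density_op[where T = T and u = u, OF CPTP \<rho>, of k M "m - M"] that
      unfolding x_def by simp
    have "schatten2 (x m - x n) < e" if "M \<le> m" "M \<le> n" for m n
      using tail[OF that(1)] tail[OF that(2)] M
        chain_diff_le[where T = T and u = u, OF CPTP contr \<open>0 \<le> c\<close>, of _ _ k M]
      by fastforce
    then show ?thesis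
      by blast
  qed
  then obtain \<sigma> where \<sigma>: "\<sigma> \<in> carrier_mat d d" and lim: "(\<lambda>N. schatten2 (x N - \<sigma>)) \<longlonglongrightarrow> 0"
    using schatten2_Cauchy_imp_convergent[of x d d] density_op_carrier[OF x] by blast
  moreover have "density_op d \<sigma>"
    using density_op_limit[OF x \<sigma> lim] .
  ultimately show ?thesis
    unfolding x_def by blast
qed

lemma chain_converges_density_op:
  assumes CPTP: "\<And>m. CPTP d (T (u m))" and contr: "\<And>m. traceless_contraction d (T (u m)) c"
    and "0 \<le> c" "c < 1" "0 < d"
  shows "\<exists>\<sigma>. density_op d \<sigma> \<and>
           (\<forall>\<rho>. (\<forall>N. density_op d (\<rho> N)) \<longrightarrow> (\<lambda>N. schatten2 (chain T u k N (\<rho> N) - \<sigma>)) \<longlonglongrightarrow> 0)"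
proof -
  obtain \<rho>\<^sub>0 where \<rho>\<^sub>0: "density_op d \<rho>\<^sub>0"
    using density_op_basis_state[OF \<open>0 < d\<close>] by blast
  then obtain \<sigma> where \<sigma>: "density_op d \<sigma>" and lim: "(\<lambda>N. schatten2 (chain T u k N \<rho>\<^sub>0 - \<sigma>)) \<longlonglongrightarrow> 0"
    using chain_convergent_density_op[where T = T and u = u, OF CPTP contr \<open>0 \<le> c\<close> \<open>c < 1\<close>] by blast
  have g_0: "(\<lambda>N. c ^ Suc N * (4 * real d)) \<longlonglongrightarrow> 0"
    using \<open>0 \<le> c\<close> \<open>c < 1\<close> by (intro tendsto_mult_left_zero LIMSEQ_power_zero[THEN LIMSEQ_Suc]) simp
  have "(\<lambda>N. schatten2 (chain T u k N (\<rho> N) - \<sigma>)) \<longlonglongrightarrow> 0"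
    if \<rho>: "\<forall>N. density_op d (\<rho> N)" for \<rho>
  proof (rule tendsto_sandwich[OF _ _ tendsto_const tendsto_add_zero[OF g_0 lim]])
    have "schatten2 (chain T u k N (\<rho> N) - \<sigma>)
          \<le> c ^ Suc N * (4 * real d) + schatten2 (chain T u k N \<rho>\<^sub>0 - \<sigma>)" for N
      using schatten2_diff_triangle[OF density_op_carrier density_op_carrier density_op_carrier[OF \<sigma>]]
        chain_diff_le[where T = T and u = u, OF CPTP contr \<open>0 \<le> c\<close> \<rho>[rule_format] \<rho>\<^sub>0, of k N]
        chain_density_op[where T = T and u = u, OF CPTP] \<rho> \<rho>\<^sub>0
      by (smt (verit))
    then show "\<forall>\<^sub>F N in sequentially. schatten2 (chain T u k N (\<rho> N) - \<sigma>)
                 \<le> c ^ Suc N * (4 * real d) + schatten2 (chain T u k N \<rho>\<^sub>0 - \<sigma>)"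
      by simp
  qed (simp add: schatten2_nonneg)
  then show ?thesis
    using \<sigma> by blast
qed

theorem lemma1:
  fixes n :: nat and L \<epsilon> :: real and D :: "real set"
    and T :: "real \<Rightarrow> complex mat \<Rightarrow> complex mat"
  assumes "n \<ge> 1" and "L > 0" and "compact D"
    and "\<forall>x \<in> D \<inter> {-L..L}. CPTP (2 ^ n) (T x)"
    and "0 < \<epsilon>" and "\<epsilon> \<le> 1"
    and "\<forall>x \<in> D \<inter> {-L..L}. \<forall>A. hermitian_mat (2 ^ n) A \<and> mat_trace A = 0 \<and> A \<noteq> 0\<^sub>m (2 ^ n) (2 ^ n)
           \<longrightarrow> schatten2 (T x A) / schatten2 A \<le> 1 - \<epsilon>"
  shows "\<forall>u \<in> K_L L D. \<forall>k :: int. \<exists>\<sigma>. density_op (2 ^ n) \<sigma> \<and>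
           (\<forall>\<rho> :: nat \<Rightarrow> complex mat. (\<forall>N. density_op (2 ^ n) (\<rho> N)) \<longrightarrow>
              (\<lambda>N. schatten2 (chain T u k N (\<rho> N) - \<sigma>)) \<longlonglongrightarrow> 0)"
proof (intro ballI allI)
  fix u k
  assume "u \<in> K_L L D"
  then have "u m \<in> D \<inter> {-L..L}" for m
    unfolding K_L_def by blast
  then have "CPTP (2 ^ n) (T (u m))" "traceless_contraction (2 ^ n) (T (u m)) (1 - \<epsilon>)" for m
    using assms(4,7) unfolding traceless_contraction_def by blast+
  then show "\<exists>\<sigma>. density_op (2 ^ n) \<sigma> \<and>
      (\<forall>\<rho>. (\<forall>N. density_op (2 ^ n) (\<rho> N)) \<longrightarrow> (\<lambda>N. schatten2 (chain T u k N (\<rho> N) - \<sigma>)) \<longlonglongrightarrow> 0)"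
    using assms(5,6) by (intro chain_converges_density_op) auto
qed

end
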